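(* Let $K\subset\mathbb{R}^{n+m}$ be a convex body, let $\mathcal{U}=\{u_1,\dots,u_k\}$ be an ordered family of linearly independent vectors of $W$, let $y\in\Sigma_\pi K$ and let $\gamma$ be a measurable section with $y=\int_{\pi(K)}\gamma(x)\,\mathrm{d}x$. Then $y\in(\Sigma_\pi K)^{\mathcal{U}}$ if and only if $\gamma(x)\in (K_x)^{\mathcal{U}}$ for almost every $x\in\pi(K)$. Consequently $$(\Sigma_\pi K)^{\mathcal{U}}=\Big\{\int_{\pi(K)}\gamma(x)\,\mathrm{d}x : \gamma \text{ measurable section with } \gamma(x)\in (K_x)^{\mathcal{U}} \text{ for almost all } x\Big\}.$$
   Context: A convex body is a non-empty compact convex subset of a real vector space; its support function is $h_L(u)=\max\{\langle u,x\rangle : x\in L\}$. For a convex body $L$ and a vector $u$, the face in direction $u$ is $L^u:=\{y\in L:\langle u,y\rangle=h_L(u)\}$, and for an ordered family $\mathcal{U}=\{u_1,\dots,u_k\}$, $L^{\mathcal{U}}:=(\cdots((L^{u_1})^{u_2})\cdots)^{u_k}$. Let $V\subset\mathbb{R}^{n+m}$ be a linear subspace of dimension $n$, $W=V^\perp$, $\pi:\mathbb{R}^{n+m}\to V$ the orthogonal projection. For $x\in\pi(K)$ let $K_x:=\{y\in W : x+y\in K\}$. A section is a map $\gamma:\pi(K)\to W$ with $\gamma(x)\in K_x$ for all $x$; measurable means Borel measurable. The fiber body is $\Sigma_\pi K:=\{\int_{\pi(K)}\gamma(x)\,\mathrm{d}x : \gamma \text{ measurable section}\}\subset W$, with $\mathrm{d}x$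 Lebesgue measure on $V$. *)

theory Defs
  imports "HOL-Analysis.Analysis"
begin

text \<open>Ambient space R^(n+m) is modelled as the product 'v \<times> 'w of two Euclidean spaces,
  with V = 'v \<times> {0} (dimension n = DIM('v)) and W = V^perp = {0} \<times> 'w identified with 'w.\<close>

definition convex_body :: "'a::euclidean_space set \<Rightarrow> bool" where
  "convex_body L \<longleftrightarrow> L \<noteq> {} \<and> compact L \<and> convex L"

definition support_fun :: "'a::euclidean_space set \<Rightarrow> 'a \<Rightarrow> real" where
  "support_fun L u = Sup ((\<lambda>x. u \<bullet> x) ` L)"

definition face :: "'a::euclidean_space set \<Rightarrow> 'a \<Rightarrow> 'a set" where
  "face L u = {y \<in> L. u \<bullet> y = support_fun L u}"

definition faces :: "'a::euclidean_space set \<Rightarrow> 'a list \<Rightarrow> 'a set" where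
  "faces L us = foldl face L us"

definition fiber :: "('v::euclidean_space \<times> 'w::euclidean_space) set \<Rightarrow> 'v \<Rightarrow> 'w set" where
  "fiber K x = {y. (x, y) \<in> K}"

definition measurable_section ::
  "('v::euclidean_space \<times> 'w::euclidean_space) set \<Rightarrow> ('v \<Rightarrow> 'w) \<Rightarrow> bool" where
  "measurable_section K \<gamma> \<longleftrightarrow>
     set_borel_measurable lborel (fst ` K) \<gamma> \<and> (\<forall>x\<in>fst ` K. \<gamma> x \<in> fiber K x)"

definition fiber_body :: "('v::euclidean_space \<times> 'w::euclidean_space) set \<Rightarrow> 'w set" where
  "fiber_body K = {(LINT x:(fst ` K)|lborel. \<gamma> x) | \<gamma>. measurable_section K \<gamma>}"

end

theory Submission
  imports Defs
begin

text \<open>Integrating sections is linear, so the support function of the fiber body in a direction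
  \<open>u\<close> is at most the integral of the support functions of the fibres, and a point \<open>\<integral>\<gamma>\<close> lies
  on the face in direction \<open>u\<close> exactly when \<open>\<gamma>(x)\<close> attains the fibrewise maximum almost
  everywhere. Iterating along the family, the support function of the iterated face of the fiber
  body is the integral of the support functions of the iterated faces of the fibres. These are
  measurable: for the empty family by upper semicontinuity, and in the inductive step because the
  one-sided directional derivative of the support function of \<open>F\<close> at \<open>a\<close> in direction \<open>v\<close> is the
  support function of the face \<open>F\<^sup>a\<close> at \<open>v\<close>. Equality with the integral holds because a
  measurable section attaining the fibrewise maxima everywhere exists.\<close>

lemma support_fun_upper:
  fixes L :: "'a::euclidean_space set"
  assumes "bounded L" "w \<in> L"
  shows "u \<bullet> w \<le> support_fun L u"
proof -
  have "bounded ((\<lambda>x. u \<bullet> x) ` L)"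
    using assms(1) by (rule bounded_linear_image) (rule bounded_linear_inner_right)
  then show ?thesis
    unfolding support_fun_def using assms(2) by (intro cSup_upper imageI bounded_imp_bdd_above)
qed

lemma support_fun_attained:
  fixes L :: "'a::euclidean_space set"
  assumes "compact L" "L \<noteq> {}"
  obtains w where "w \<in> L" "u \<bullet> w = support_fun L u"
proof -
  have "compact ((\<lambda>x. u \<bullet> x) ` L)"
    by (intro compact_continuous_image assms continuous_intros)
  then obtain w where "w \<in> L" "\<forall>x\<in>L. u \<bullet> x \<le> u \<bullet> w"
    using compact_attains_sup[of "(\<lambda>x. u \<bullet> x) ` L"] assms(2) by auto
  then have "support_fun L u = u \<bullet> w"
    unfolding support_fun_def by (intro cSup_eq_maximum) auto
  with \<open>w \<in> L\<close> show ?thesis by (intro that) auto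
qed

lemma face_subset: "face L u \<subseteq> L"
  by (auto simp: face_def)

lemma faces_Nil [simp]: "faces L [] = L"
  by (simp add: faces_def)

lemma faces_append: "faces L (us @ vs) = faces (faces L us) vs"
  by (simp add: faces_def)

lemma faces_snoc: "faces L (us @ [u]) = face (faces L us) u"
  by (simp add: faces_def)

lemma faces_subset: "faces L us \<subseteq> L"
  by (induction us rule: rev_induct) (use face_subset in \<open>auto simp: faces_snoc\<close>)

lemma compact_face:
  fixes L :: "'a::euclidean_space set"
  assumes "compact L" "L \<noteq> {}"
  shows "compact (face L u) \<and> face L u \<noteq> {}"
proof
  have "face L u = L \<inter> {y. u \<bullet> y = support_fun L u}"
    by (auto simp: face_def)
  then show "compact (face L u)"
    using assms(1) by (auto intro!: compact_Int_closed closed_Collect_eq continuous_intros)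
  show "face L u \<noteq> {}"
    using support_fun_attained[OF assms, of u] by (auto simp: face_def)
qed

lemma compact_faces:
  fixes L :: "'a::euclidean_space set"
  assumes "compact L" "L \<noteq> {}"
  shows "compact (faces L us) \<and> faces L us \<noteq> {}"
  by (induction us rule: rev_induct) (use assms compact_face in \<open>auto simp: faces_snoc\<close>)

lemma faces_inner_const:
  assumes "b \<in> set us" "q \<in> faces L us" "q' \<in> faces L us"
  shows "b \<bullet> q = b \<bullet> q'"
proof -
  obtain us1 us2 where us: "us = us1 @ b # us2"
    using split_list[OF assms(1)] by blast
  have "faces L us \<subseteq> face (faces L us1) b"
    unfolding us faces_append using faces_subset by (simp add: faces_def)
  then have "b \<bullet> p = support_fun (faces L us1) b" if "p \<in> faces L us" for p
    using that by (auto simp: face_def)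
  then show ?thesis
    using assms(2,3) by simp
qed

lemma inner_le_norm_bound:
  fixes v w :: "'a::real_inner"
  assumes "norm w \<le> R"
  shows "\<bar>v \<bullet> w\<bar> \<le> norm v * R"
  using Cauchy_Schwarz_ineq2[of v w] mult_left_mono[OF assms norm_ge_zero[of v]] by linarith

lemma support_fun_gap:
  fixes F :: "'a::euclidean_space set"
  assumes "compact F" "compact C" "C \<subseteq> F" "C \<inter> face F a = {}"
  obtains \<eta> where "\<eta> > 0" "\<And>w. w \<in> C \<Longrightarrow> a \<bullet> w \<le> support_fun F a - \<eta>"
proof (cases "C = {}")
  case False
  then obtain ws where ws: "ws \<in> C" "a \<bullet> ws = support_fun C a"
    using support_fun_attained[OF assms(2)] by metis
  have "a \<bullet> ws \<le> support_fun F a"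
    using assms(1,3) ws(1) by (intro support_fun_upper) (auto simp: compact_imp_bounded)
  moreover have "a \<bullet> ws \<noteq> support_fun F a"
    using assms(3,4) ws(1) by (auto simp: face_def)
  moreover have "a \<bullet> w \<le> a \<bullet> ws" if "w \<in> C" for w
    using ws(2) support_fun_upper[OF compact_imp_bounded[OF assms(2)] that] by simp
  ultimately show ?thesis
    by (intro that[of "support_fun F a - a \<bullet> ws"]) auto
qed (rule that[of 1], auto)

lemma support_fun_face_le_difference_quotient:
  fixes F :: "'a::euclidean_space set"
  assumes "compact F" "F \<noteq> {}" "t > 0"
  shows "support_fun (face F a) v \<le> (support_fun F (a + t *\<^sub>R v) - support_fun F a) / t"
proof -
  obtain w where w: "w \<in> face F a" "v \<bullet> w = support_fun (face F a) v"
    using compact_face[OF assms(1,2)] support_fun_attained by metis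
  then have "support_fun F a + t * support_fun (face F a) v = (a + t *\<^sub>R v) \<bullet> w"
    by (simp add: face_def inner_add_left)
  also have "\<dots> \<le> support_fun F (a + t *\<^sub>R v)"
    using w(1) face_subset by (intro support_fun_upper compact_imp_bounded assms(1)) blast
  finally show ?thesis
    using assms(3) by (simp add: pos_le_divide_eq mult.commute)
qed

lemma difference_quotient_le_inner_maximizer:
  fixes F :: "'a::euclidean_space set"
  assumes "bounded F" "w \<in> F" "(a + t *\<^sub>R v) \<bullet> w = support_fun F (a + t *\<^sub>R v)" "t > 0"
  shows "(support_fun F (a + t *\<^sub>R v) - support_fun F a) / t \<le> v \<bullet> w"
  using support_fun_upper[OF assms(1,2), of a] assms(3,4)
  by (simp add: divide_le_eq inner_add_left algebra_simps)

text \<open>For small \<open>t\<close> a maximizer of \<open>a + t v\<close> stays away from the compact set of points of \<open>F\<close>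
  where \<open>v\<close> exceeds its maximum over the face by \<open>\<epsilon>\<close>, since \<open>a\<close> falls short of its maximum
  there by a fixed amount.\<close>

lemma difference_quotient_eventually_less:
  fixes F :: "'a::euclidean_space set"
  assumes F: "compact F" "F \<noteq> {}" and "\<epsilon> > 0"
  shows "eventually (\<lambda>t. (support_fun F (a + t *\<^sub>R v) - support_fun F a) / t
    < support_fun (face F a) v + \<epsilon>) (at_right 0)"
proof -
  define g where "g = support_fun (face F a) v"
  define C where "C = {w \<in> F. g + \<epsilon> \<le> v \<bullet> w}"
  have "C = F \<inter> {w. g + \<epsilon> \<le> v \<bullet> w}"
    by (auto simp: C_def)
  then have "compact C"
    using F(1) by (auto intro!: compact_Int_closed closed_Collect_le continuous_intros)
  moreover have "v \<bullet> w \<le> g" if "w \<in> face F a" for w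
    unfolding g_def using compact_imp_bounded compact_face[OF F] that by (blast intro: support_fun_upper)
  then have "C \<inter> face F a = {}"
    using \<open>\<epsilon> > 0\<close> by (force simp: C_def)
  ultimately obtain \<eta> where \<eta>: "\<eta> > 0" "\<And>w. w \<in> C \<Longrightarrow> a \<bullet> w \<le> support_fun F a - \<eta>"
    using support_fun_gap[OF F(1)] unfolding C_def by blast
  obtain R where R: "\<And>w. w \<in> F \<Longrightarrow> norm w \<le> R"
    using compact_imp_bounded[OF F(1)] by (auto simp: bounded_iff)
  have quotient_less: "(support_fun F (a + t *\<^sub>R v) - support_fun F a) / t < g + \<epsilon>"
    if t: "0 < t" "t * (2 * (norm v * R)) < \<eta>" for t
  proof -
    obtain w where w: "w \<in> F" "(a + t *\<^sub>R v) \<bullet> w = support_fun F (a + t *\<^sub>R v)"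
      using support_fun_attained[OF F] by metis
    have "w \<notin> C"
    proof
      assume "w \<in> C"
      have "support_fun F a + t * g \<le> a \<bullet> w + t * (v \<bullet> w)"
        using support_fun_face_le_difference_quotient[OF F t(1), of a v] t(1) w(2)
        by (simp add: g_def le_divide_eq inner_add_left algebra_simps)
      moreover obtain w0 where "w0 \<in> face F a" "v \<bullet> w0 = g"
        using compact_face[OF F] support_fun_attained unfolding g_def by metis
      then have "v \<bullet> w - g \<le> 2 * (norm v * R)"
        using inner_le_norm_bound[OF R[OF w(1)], of v] inner_le_norm_bound[OF R, of w0 v] face_subset
        by fastforce
      then have "t * (v \<bullet> w - g) \<le> t * (2 * (norm v * R))"
        using t(1) by (intro mult_left_mono) auto
      ultimately show False
        using t(2) \<eta>(2)[OF \<open>w \<in> C\<close>] by (simp add: algebra_simps)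
    qed
    then show ?thesis
      using difference_quotient_le_inner_maximizer[OF compact_imp_bounded[OF F(1)] w t(1)] w(1)
      by (simp add: C_def)
  qed
  have "eventually (\<lambda>t. t * (2 * (norm v * R)) < \<eta>) (at_right 0)"
    using order_tendstoD(2)[OF tendsto_mult_left_zero[OF tendsto_ident_at] \<eta>(1)] by simp
  with eventually_at_right_less[of 0]
  have "eventually (\<lambda>t. (support_fun F (a + t *\<^sub>R v) - support_fun F a) / t < g + \<epsilon>) (at_right 0)"
    by eventually_elim (rule quotient_less)
  then show ?thesis
    by (simp only: g_def)
qed

lemma support_fun_directional_derivative:
  fixes F :: "'a::euclidean_space set"
  assumes "compact F" "F \<noteq> {}"
  shows "((\<lambda>t. (support_fun F (a + t *\<^sub>R v) - support_fun F a) / t)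
           \<longlongrightarrow> support_fun (face F a) v) (at_right 0)"
proof (rule order_tendstoI)
  fix y assume y: "y < support_fun (face F a) v"
  show "eventually (\<lambda>t. y < (support_fun F (a + t *\<^sub>R v) - support_fun F a) / t) (at_right 0)"
    using eventually_at_right_less[of 0]
    by eventually_elim (rule less_le_trans[OF y support_fun_face_le_difference_quotient[OF assms]])
next
  fix y assume "support_fun (face F a) v < y"
  then show "eventually (\<lambda>t. (support_fun F (a + t *\<^sub>R v) - support_fun F a) / t < y) (at_right 0)"
    using difference_quotient_eventually_less[OF assms, of "y - support_fun (face F a) v" a v] by simp
qed

lemma compact_fiber:
  fixes K :: "('v::euclidean_space \<times> 'w::euclidean_space) set"
  assumes "compact K" "x \<in> fst ` K"
  shows "compact (fiber K x) \<and> fiber K x \<noteq> {}"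
proof
  have "fiber K x = snd ` (K \<inter> {p. fst p = x})"
    by (force simp: fiber_def)
  then show "compact (fiber K x)"
    using assms(1) by (auto intro!: compact_continuous_image compact_Int_closed closed_Collect_eq
      continuous_intros)
  show "fiber K x \<noteq> {}"
    using assms(2) by (auto simp: fiber_def)
qed

lemma compact_faces_fiber:
  fixes K :: "('v::euclidean_space \<times> 'w::euclidean_space) set"
  assumes "compact K" "x \<in> fst ` K"
  shows "compact (faces (fiber K x) us) \<and> faces (fiber K x) us \<noteq> {}"
  using compact_faces compact_fiber[OF assms] by blast

definition fiber_support ::
    "('v::euclidean_space \<times> 'w::euclidean_space) set \<Rightarrow> 'w list \<Rightarrow> 'w \<Rightarrow> 'v \<Rightarrow> real"
  where "fiber_support K us u x = (if x \<in> fst ` K then support_fun (faces (fiber K x) us) u else 0)"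

lemma superlevel_support_fun_fiber:
  fixes K :: "('v::euclidean_space \<times> 'w::euclidean_space) set"
  assumes "compact K"
  shows "{x \<in> fst ` K. c \<le> support_fun (fiber K x) u} = fst ` (K \<inter> {p. c \<le> u \<bullet> snd p})"
proof (intro set_eqI iffI)
  fix x assume x: "x \<in> {x \<in> fst ` K. c \<le> support_fun (fiber K x) u}"
  then obtain y where "y \<in> fiber K x" "u \<bullet> y = support_fun (fiber K x) u"
    using compact_fiber[OF assms] support_fun_attained by blast
  with x show "x \<in> fst ` (K \<inter> {p. c \<le> u \<bullet> snd p})"
    by (force simp: fiber_def)
next
  fix x assume "x \<in> fst ` (K \<inter> {p. c \<le> u \<bullet> snd p})"
  then obtain y where "(x, y) \<in> K" "c \<le> u \<bullet> y"
    by auto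
  moreover have "x \<in> fst ` K"
    using \<open>(x, y) \<in> K\<close> by force
  then have "bounded (fiber K x)"
    using compact_fiber[OF assms] compact_imp_bounded by blast
  then have "u \<bullet> y \<le> support_fun (fiber K x) u"
    using \<open>(x, y) \<in> K\<close> by (intro support_fun_upper) (auto simp: fiber_def)
  ultimately show "x \<in> {x \<in> fst ` K. c \<le> support_fun (fiber K x) u}"
    by force
qed

text \<open>On the fibres the support function is upper semicontinuous, since its superlevel sets are
  projections of compact sets.\<close>

lemma borel_measurable_fiber_support_Nil:
  fixes K :: "('v::euclidean_space \<times> 'w::euclidean_space) set"
  assumes "compact K"
  shows "fiber_support K [] u \<in> borel_measurable borel"
proof -
  have "{x. c \<le> fiber_support K [] u x} \<in> sets borel" for c
  proof -
    have eq: "{x. c \<le> fiber_support K [] u x} =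
        fst ` (K \<inter> {p. c \<le> u \<bullet> snd p}) \<union> (if c \<le> 0 then - fst ` K else {})"
      using superlevel_support_fun_fiber[OF assms, of c u] by (auto simp: fiber_support_def)
    have "compact (fst ` (K \<inter> {p. c \<le> u \<bullet> snd p}))" "compact (fst ` K)"
      using assms by (auto intro!: compact_continuous_image compact_Int_closed closed_Collect_le
        continuous_intros)
    then show ?thesis
      unfolding eq by (intro sets.Un) (auto intro: borel_closed borel_open compact_imp_closed)
  qed
  then show ?thesis
    by (simp add: borel_measurable_iff_ge)
qed

lemma borel_measurable_fiber_support:
  fixes K :: "('v::euclidean_space \<times> 'w::euclidean_space) set"
  assumes "compact K"
  shows "fiber_support K us u \<in> borel_measurable borel"
proof (induction us arbitrary: u rule: rev_induct)
  case Nil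
  show ?case using borel_measurable_fiber_support_Nil[OF assms] .
next
  case (snoc a us)
  define t :: "nat \<Rightarrow> real" where "t n = inverse (real (Suc n))" for n
  have t: "filterlim t (at_right 0) sequentially"
    unfolding t_def
    by (rule filterlim_compose[OF filterlim_inverse_at_right_top
          filterlim_compose[OF filterlim_real_sequentially filterlim_Suc]])
  show ?case
  proof (rule borel_measurable_LIMSEQ_real)
    fix x
    show "(\<lambda>n. (fiber_support K us (a + t n *\<^sub>R u) x - fiber_support K us a x) / t n)
        \<longlonglongrightarrow> fiber_support K (us @ [a]) u x"
    proof (cases "x \<in> fst ` K")
      case True
      then have "compact (faces (fiber K x) us)" "faces (fiber K x) us \<noteq> {}"
        using compact_faces_fiber[OF assms] by auto
      from filterlim_compose[OF support_fun_directional_derivative[OF this, of a u] t]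
      show ?thesis
        by (simp add: fiber_support_def faces_snoc True)
    qed (simp add: fiber_support_def)
  qed (use snoc.IH in measurable)
qed

text \<open>Appending a basis to the family shrinks every face to a single point, whose coordinates are
  values of the measurable functions \<open>fiber_support\<close>.\<close>

lemma measurable_section_in_faces:
  fixes K :: "('v::euclidean_space \<times> 'w::euclidean_space) set"
  assumes "compact K"
  obtains \<delta> where "measurable_section K \<delta>"
    and "\<And>x. x \<in> fst ` K \<Longrightarrow> \<delta> x \<in> faces (fiber K x) us"
proof -
  obtain bs :: "'w list" where bs: "set bs = Basis"
    using finite_list[OF finite_Basis] by blast
  define \<delta> where "\<delta> x = (\<Sum>b\<in>Basis. fiber_support K (us @ bs) b x *\<^sub>R b)" for x
  have \<delta>_faces: "\<delta> x \<in> faces (fiber K x) us" if x: "x \<in> fst ` K" for x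
  proof -
    let ?Q = "faces (fiber K x) (us @ bs)"
    obtain q where q: "q \<in> ?Q"
      using compact_faces_fiber[OF assms x] by blast
    have "fiber_support K (us @ bs) b x = q \<bullet> b" if "b \<in> Basis" for b
    proof -
      have "b \<bullet> w = b \<bullet> q" if "w \<in> ?Q" for w
        using faces_inner_const[of b "us @ bs" w "fiber K x" q] that q \<open>b \<in> Basis\<close> bs by simp
      then have "(\<lambda>w. b \<bullet> w) ` ?Q = {b \<bullet> q}"
        using q by blast
      then show ?thesis
        using x by (simp add: fiber_support_def support_fun_def inner_commute)
    qed
    then have "\<delta> x = q"
      unfolding \<delta>_def by (simp add: euclidean_representation)
    moreover have "?Q \<subseteq> faces (fiber K x) us"
      unfolding faces_append by (rule faces_subset)
    ultimately show ?thesis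
      using q by blast
  qed
  have "\<delta> \<in> borel_measurable borel"
    unfolding \<delta>_def using borel_measurable_fiber_support[OF assms] by measurable
  moreover have "fst ` K \<in> sets borel"
    using assms by (auto intro!: borel_closed compact_imp_closed compact_continuous_image
      continuous_intros)
  ultimately have "set_borel_measurable lborel (fst ` K) \<delta>"
    unfolding set_borel_measurable_def by measurable
  then show ?thesis
    using \<delta>_faces faces_subset by (intro that[of \<delta>]) (auto simp: measurable_section_def)
qed

context
  fixes K :: "('v::euclidean_space \<times> 'w::euclidean_space) set"
  assumes K: "compact K"
begin

lemma integrable_indicator_projection: "integrable lborel (\<lambda>x. c * indicator (fst ` K) x :: real)"
proof -
  have "compact (fst ` K)"
    using K by (intro compact_continuous_image continuous_intros)
  then have "integrable lborel (indicator (fst ` K) :: 'v \<Rightarrow> real)"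
    using emeasure_bounded_finite[OF compact_imp_bounded]
    by (simp add: integrable_indicator_iff borel_closed compact_imp_closed)
  then show ?thesis
    by simp
qed

lemma fiber_norm_bound:
  obtains R where "R \<ge> 0" "\<And>x w. w \<in> fiber K x \<Longrightarrow> norm w \<le> R"
proof -
  obtain R where R: "R > 0" "\<And>p. p \<in> K \<Longrightarrow> norm p \<le> R"
    using compact_imp_bounded[OF K] by (auto simp: bounded_pos)
  have "norm w \<le> R" if "w \<in> fiber K x" for x w
  proof -
    have "norm (x, w) \<le> R"
      using R(2) that by (simp add: fiber_def)
    then show ?thesis
      using norm_snd_le[of w x] by linarith
  qed
  then show ?thesis
    using R(1) by (intro that[of R]) auto
qed

lemma integrable_section:
  assumes "measurable_section K \<delta>"
  shows "integrable lborel (\<lambda>x. indicator (fst ` K) x *\<^sub>R \<delta> x)"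
proof -
  obtain R where R: "R \<ge> 0" "\<And>x w. w \<in> fiber K x \<Longrightarrow> norm w \<le> R"
    using fiber_norm_bound by blast
  show ?thesis
  proof (rule Bochner_Integration.integrable_bound[OF integrable_indicator_projection[of R]])
    show "(\<lambda>x. indicator (fst ` K) x *\<^sub>R \<delta> x) \<in> borel_measurable lborel"
      using assms by (simp add: measurable_section_def set_borel_measurable_def)
    show "AE x in lborel. norm (indicator (fst ` K) x *\<^sub>R \<delta> x) \<le> norm (R * indicator (fst ` K) x)"
      using assms R by (auto simp: measurable_section_def indicator_def)
  qed
qed

lemma inner_section_integral:
  assumes "measurable_section K \<delta>"
  shows "u \<bullet> (LINT x:fst ` K|lborel. \<delta> x) = (LINT x|lborel. indicator (fst ` K) x * (u \<bullet> \<delta> x))"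
    and "integrable lborel (\<lambda>x. indicator (fst ` K) x * (u \<bullet> \<delta> x))"
  using integral_inner_right[OF integrable_section[OF assms], of u]
    integrable_inner_right[OF integrable_section[OF assms], of u]
  by (simp_all add: set_lebesgue_integral_def)

lemma integrable_fiber_support: "integrable lborel (fiber_support K us u)"
proof -
  obtain R where R: "R \<ge> 0" "\<And>x w. w \<in> fiber K x \<Longrightarrow> norm w \<le> R"
    using fiber_norm_bound by blast
  have "\<bar>fiber_support K us u x\<bar> \<le> norm u * R * indicator (fst ` K) x" for x
  proof (cases "x \<in> fst ` K")
    case True
    then obtain w where w: "w \<in> faces (fiber K x) us" "u \<bullet> w = support_fun (faces (fiber K x) us) u"
      using compact_faces_fiber[OF K] support_fun_attained by metis
    then have "norm w \<le> R"
      using R(2) faces_subset by blast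
    then show ?thesis
      using inner_le_norm_bound[of w R u] w(2) True by (simp add: fiber_support_def)
  qed (simp add: fiber_support_def)
  then show ?thesis
    by (intro Bochner_Integration.integrable_bound[OF integrable_indicator_projection[of "norm u * R"]])
      (auto simp: borel_measurable_fiber_support[OF K] intro!: AE_I2 order_trans[OF _ abs_ge_self])
qed

lemma inner_section_le_fiber_support:
  assumes "x \<in> fst ` K \<longrightarrow> \<delta> x \<in> faces (fiber K x) us"
  shows "indicator (fst ` K) x * (u \<bullet> \<delta> x) \<le> fiber_support K us u x"
  using assms compact_faces_fiber[OF K, of x us]
  by (auto simp: fiber_support_def intro: support_fun_upper compact_imp_bounded)

lemma inner_integral_le_fiber_support:
  assumes "measurable_section K \<delta>"
    and "AE x in lborel. x \<in> fst ` K \<longrightarrow> \<delta> x \<in> faces (fiber K x) us"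
  shows "u \<bullet> (LINT x:fst ` K|lborel. \<delta> x) \<le> integral\<^sup>L lborel (fiber_support K us u)"
  unfolding inner_section_integral(1)[OF assms(1)]
  using assms(2) by (intro integral_mono_AE inner_section_integral(2)[OF assms(1)]
    integrable_fiber_support) (auto elim: AE_mp intro: inner_section_le_fiber_support)

lemma inner_integral_eq_fiber_support_iff:
  assumes \<delta>: "measurable_section K \<delta>"
    and faces: "AE x in lborel. x \<in> fst ` K \<longrightarrow> \<delta> x \<in> faces (fiber K x) us"
  shows "u \<bullet> (LINT x:fst ` K|lborel. \<delta> x) = integral\<^sup>L lborel (fiber_support K us u) \<longleftrightarrow>
    (AE x in lborel. x \<in> fst ` K \<longrightarrow> \<delta> x \<in> faces (fiber K x) (us @ [u]))"
    (is "?eq \<longleftrightarrow> ?ae")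
proof
  assume ?eq
  have "AE x in lborel. indicator (fst ` K) x * (u \<bullet> \<delta> x) = fiber_support K us u x"
    using \<open>?eq\<close> faces
    by (intro integral_ineq_eq_0_then_AE inner_section_integral(2)[OF \<delta>] integrable_fiber_support)
      (auto simp: inner_section_integral(1)[OF \<delta>] elim: AE_mp intro: inner_section_le_fiber_support)
  with faces show ?ae
  proof eventually_elim
    case (elim x)
    show ?case
    proof
      assume "x \<in> fst ` K"
      with elim show "\<delta> x \<in> faces (fiber K x) (us @ [u])"
        by (simp add: fiber_support_def faces_snoc face_def)
    qed
  qed
next
  assume ?ae
  then have "AE x in lborel. indicator (fst ` K) x * (u \<bullet> \<delta> x) = fiber_support K us u x"
  proof eventually_elim
    case (elim x)
    then show ?case
      by (cases "x \<in> fst ` K") (simp_all add: fiber_support_def faces_snoc face_def)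
  qed
  then show ?eq
    unfolding inner_section_integral(1)[OF \<delta>]
    using borel_measurable_integrable[OF inner_section_integral(2)[OF \<delta>]]
      borel_measurable_integrable[OF integrable_fiber_support]
    by (intro integral_cong_AE) auto
qed

lemma support_fun_faces_fiber_body:
  assumes faces_iff: "\<And>\<delta>. measurable_section K \<delta> \<Longrightarrow>
    (LINT x:fst ` K|lborel. \<delta> x) \<in> faces (fiber_body K) us \<longleftrightarrow>
    (AE x in lborel. x \<in> fst ` K \<longrightarrow> \<delta> x \<in> faces (fiber K x) us)"
  shows "support_fun (faces (fiber_body K) us) u = integral\<^sup>L lborel (fiber_support K us u)"
proof -
  obtain \<delta> where \<delta>: "measurable_section K \<delta>"
    and \<delta>_faces: "\<And>x. x \<in> fst ` K \<Longrightarrow> \<delta> x \<in> faces (fiber K x) (us @ [u])"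
    using measurable_section_in_faces[OF K] by blast
  have "AE x in lborel. x \<in> fst ` K \<longrightarrow> \<delta> x \<in> faces (fiber K x) us"
    using \<delta>_faces face_subset by (intro AE_I2) (auto simp: faces_snoc)
  then have "(LINT x:fst ` K|lborel. \<delta> x) \<in> faces (fiber_body K) us"
    and "u \<bullet> (LINT x:fst ` K|lborel. \<delta> x) = integral\<^sup>L lborel (fiber_support K us u)"
    using faces_iff[OF \<delta>] inner_integral_eq_fiber_support_iff[OF \<delta>] \<delta>_faces by auto
  moreover have "u \<bullet> z \<le> integral\<^sup>L lborel (fiber_support K us u)"
    if "z \<in> faces (fiber_body K) us" for z
  proof -
    obtain \<gamma> where "measurable_section K \<gamma>" "z = (LINT x:fst ` K|lborel. \<gamma> x)"
      using \<open>z \<in> faces (fiber_body K) us\<close> faces_subset by (force simp: fiber_body_def)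
    then show ?thesis
      using faces_iff inner_integral_le_fiber_support that by blast
  qed
  ultimately show ?thesis
    unfolding support_fun_def by (intro cSup_eq_maximum) (auto intro: rev_image_eqI)
qed

lemma integral_section_in_faces_fiber_body_iff:
  assumes "measurable_section K \<delta>"
  shows "(LINT x:fst ` K|lborel. \<delta> x) \<in> faces (fiber_body K) us \<longleftrightarrow>
    (AE x in lborel. x \<in> fst ` K \<longrightarrow> \<delta> x \<in> faces (fiber K x) us)"
  using assms
proof (induction us arbitrary: \<delta> rule: rev_induct)
  case Nil
  then show ?case
    by (auto simp: fiber_body_def measurable_section_def)
next
  case (snoc u us)
  let ?y = "LINT x:fst ` K|lborel. \<delta> x"
  have "?y \<in> faces (fiber_body K) (us @ [u]) \<longleftrightarrow>
      ?y \<in> faces (fiber_body K) us \<and> u \<bullet> ?y = support_fun (faces (fiber_body K) us) u"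
    by (simp add: faces_snoc face_def)
  also have "\<dots> \<longleftrightarrow> (AE x in lborel. x \<in> fst ` K \<longrightarrow> \<delta> x \<in> faces (fiber K x) us) \<and>
      u \<bullet> ?y = integral\<^sup>L lborel (fiber_support K us u)"
    using snoc.IH[OF snoc.prems] support_fun_faces_fiber_body[OF snoc.IH] by simp
  also have "\<dots> \<longleftrightarrow> (AE x in lborel. x \<in> fst ` K \<longrightarrow> \<delta> x \<in> faces (fiber K x) (us @ [u]))"
  proof -
    have "AE x in lborel. x \<in> fst ` K \<longrightarrow> \<delta> x \<in> faces (fiber K x) us"
      if "AE x in lborel. x \<in> fst ` K \<longrightarrow> \<delta> x \<in> faces (fiber K x) (us @ [u])"
      using that by eventually_elim (auto simp: faces_snoc dest: subsetD[OF face_subset])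
    then show ?thesis
      using inner_integral_eq_fiber_support_iff[OF snoc.prems] by blast
  qed
  finally show ?case .
qed

end

theorem mainTheorem5:
  fixes K :: "('v::euclidean_space \<times> 'w::euclidean_space) set"
    and us :: "'w list" and y :: 'w and \<gamma> :: "'v \<Rightarrow> 'w"
  assumes "convex_body K"
    and "distinct us" and "independent (set us)"
    and "y \<in> fiber_body K"
    and "measurable_section K \<gamma>"
    and "y = (LINT x:(fst ` K)|lborel. \<gamma> x)"
  shows "(y \<in> faces (fiber_body K) us \<longleftrightarrow>
           (AE x in lborel. x \<in> fst ` K \<longrightarrow> \<gamma> x \<in> faces (fiber K x) us))
         \<and> faces (fiber_body K) us =
           {(LINT x:(fst ` K)|lborel. \<delta> x) | \<delta>. measurable_section K \<delta> \<and>
              (AE x in lborel. x \<in> fst ` K \<longrightarrow> \<delta> x \<in> faces (fiber K x) us)}"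
proof
  have K: "compact K"
    using assms(1) by (simp add: convex_body_def)
  note faces_iff = integral_section_in_faces_fiber_body_iff[OF K]
  show "y \<in> faces (fiber_body K) us \<longleftrightarrow>
      (AE x in lborel. x \<in> fst ` K \<longrightarrow> \<gamma> x \<in> faces (fiber K x) us)"
    using faces_iff[OF assms(5)] assms(6) by simp
  have "faces (fiber_body K) us \<subseteq> fiber_body K"
    by (rule faces_subset)
  then show "faces (fiber_body K) us =
      {(LINT x:(fst ` K)|lborel. \<delta> x) | \<delta>. measurable_section K \<delta> \<and>
        (AE x in lborel. x \<in> fst ` K \<longrightarrow> \<delta> x \<in> faces (fiber K x) us)}"
    using faces_iff unfolding fiber_body_def by blast
qed

end
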